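(* Let $G$ be a connected graph, let $u\in V(G)$ be any vertex, and let $G'$ be obtained from $G$ by adding a new vertex $x$ and the edge $ux$. If $G$ forces an all-ones representation then $\operatorname{cdim}(G')=\operatorname{cdim}(G)+1$; otherwise $\operatorname{cdim}(G')=\operatorname{cdim}(G)$. In particular, the value of $\operatorname{cdim}(G')$ does not depend on the choice of $u$.
   Context: All graphs are finite, simple, undirected and nonempty. For distinct vertices $v,w$ of a graph $G$, $\kappa_G(v,w)$ is the maximum number of internally vertex-disjoint $v$–$w$ paths in $G$ (an edge $vw$ counts as one such path); $\kappa_G(v,v)=\infty$. For an ordered vertex set $W=(w_1,\ldots,w_k)$, $r_G(v,W)=[\kappa_G(v,w_1),\ldots,\kappa_G(v,w_k)]$. $W$ is resolving for $G$ if $r_G(v_1,W)=r_G(v_2,W)$ implies $v_1=v_2$. A (connectivity) basis is a resolving set of minimum cardinality, and $\operatorname{cdim}(G)$ is its cardinality. A graph $G$ forces an all-ones representation if for every basis $B$ of $G$ there is a vertex $v\in V(G)$ with $r_G(v,B)=[1,\ldots,1]$ (all entries equal to $1$); the one-vertex graph $K_1$ (only basis $\emptyset$, empty representation vector) counts as forcing an all-ones representation. *)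

theory Defs
  imports "HOL-Library.Extended_Nat"
begin

definition graph :: "'a set \<Rightarrow> 'a set set \<Rightarrow> bool" where
  "graph V E \<longleftrightarrow> finite V \<and> V \<noteq> {} \<and>
     E \<subseteq> {{a, b} | a b. a \<in> V \<and> b \<in> V \<and> a \<noteq> b}"

definition is_path :: "'a set \<Rightarrow> 'a set set \<Rightarrow> 'a \<Rightarrow> 'a \<Rightarrow> 'a list \<Rightarrow> bool" where
  "is_path V E v w p \<longleftrightarrow> p \<noteq> [] \<and> hd p = v \<and> last p = w \<and> distinct p \<and> set p \<subseteq> V \<and>
     (\<forall>i. Suc i < length p \<longrightarrow> {p ! i, p ! Suc i} \<in> E)"

definition connected :: "'a set \<Rightarrow> 'a set set \<Rightarrow> bool" where
  "connected V E \<longleftrightarrow> (\<forall>v\<in>V. \<forall>w\<in>V. \<exists>p. is_path V E v w p)"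

definition int_disjoint_paths :: "'a set \<Rightarrow> 'a set set \<Rightarrow> 'a \<Rightarrow> 'a \<Rightarrow> 'a list set \<Rightarrow> bool" where
  "int_disjoint_paths V E v w P \<longleftrightarrow> (\<forall>p\<in>P. is_path V E v w p) \<and>
     (\<forall>p\<in>P. \<forall>q\<in>P. p \<noteq> q \<longrightarrow> set p \<inter> set q \<subseteq> {v, w})"

definition kappa :: "'a set \<Rightarrow> 'a set set \<Rightarrow> 'a \<Rightarrow> 'a \<Rightarrow> enat" where
  "kappa V E v w = (if v = w then \<infinity>
     else enat (Max {card P | P. int_disjoint_paths V E v w P}))"

definition rep :: "'a set \<Rightarrow> 'a set set \<Rightarrow> 'a \<Rightarrow> 'a list \<Rightarrow> enat list" where
  "rep V E v W = map (kappa V E v) W"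

definition resolving :: "'a set \<Rightarrow> 'a set set \<Rightarrow> 'a list \<Rightarrow> bool" where
  "resolving V E W \<longleftrightarrow> distinct W \<and> set W \<subseteq> V \<and>
     (\<forall>v1\<in>V. \<forall>v2\<in>V. rep V E v1 W = rep V E v2 W \<longrightarrow> v1 = v2)"

definition cdim :: "'a set \<Rightarrow> 'a set set \<Rightarrow> nat" where
  "cdim V E = (LEAST k. \<exists>W. resolving V E W \<and> length W = k)"

definition basis :: "'a set \<Rightarrow> 'a set set \<Rightarrow> 'a list \<Rightarrow> bool" where
  "basis V E B \<longleftrightarrow> resolving V E B \<and> length B = cdim V E"

definition forces_all_ones :: "'a set \<Rightarrow> 'a set set \<Rightarrow> bool" where
  "forces_all_ones V E \<longleftrightarrow>
     (\<forall>B. basis V E B \<longrightarrow> (\<exists>v\<in>V. rep V E v B = replicate (length B) 1))"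

end

theory Submission
  imports Defs
begin

(* A path between two old vertices cannot pass through x
   (both its neighbours on the path would be u), so connectivities among old vertices are
   unchanged; and every v-x path ends with the edge ux, so two internally disjoint ones
   would meet in u, whence kappa(v, x) = 1 for every old v, connectivity supplying one path.
   Thus x has the all-ones representation with respect to any W of old vertices, and such a
   W resolves G' iff it resolves G and no old vertex has the all-ones representation.
   Appending x to a basis of G resolves G', and deleting x from a resolving set of G'
   resolves G; so cdim G <= cdim G' <= cdim G + 1, and cdim G' = cdim G holds exactly when
   some basis of G avoids the all-ones representation. *)

lemma is_path_adjacent:
  assumes "is_path V E v w (xs @ a # b # ys)" shows "{a, b} \<in> E"
proof -
  have "\<forall>i. Suc i < length (xs @ a # b # ys) \<longrightarrow>
      {(xs @ a # b # ys) ! i, (xs @ a # b # ys) ! Suc i} \<in> E"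
    using assms unfolding is_path_def by blast
  from this[rule_format, of "length xs"] show ?thesis by (simp add: nth_append)
qed

lemma is_path_rev:
  assumes "is_path V E v w p" shows "is_path V E w v (rev p)"
proof -
  have "{rev p ! i, rev p ! Suc i} \<in> E" if "Suc i < length p" for i
  proof -
    have "{p ! (length p - Suc (Suc i)), p ! Suc (length p - Suc (Suc i))} \<in> E"
      using assms that unfolding is_path_def by simp
    moreover have "Suc (length p - Suc (Suc i)) = length p - Suc i" using that by simp
    ultimately show ?thesis using that by (simp add: rev_nth insert_commute)
  qed
  then show ?thesis using assms unfolding is_path_def by (simp add: hd_rev last_rev)
qed

lemma is_path_snoc:
  assumes "is_path V E v w p" and "y \<in> V" and "y \<notin> set p" and "{w, y} \<in> E"
  shows "is_path V E v y (p @ [y])"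
proof -
  have "{(p @ [y]) ! i, (p @ [y]) ! Suc i} \<in> E" if "Suc i < Suc (length p)" for i
  proof (cases "Suc i < length p")
    case True then show ?thesis using assms(1) unfolding is_path_def by (simp add: nth_append)
  next
    case False
    with that have "Suc i = length p" by simp
    with assms(1) have "p ! i = w" unfolding is_path_def by (metis diff_Suc_1 last_conv_nth)
    with \<open>Suc i = length p\<close> assms(4) show ?thesis by (simp add: nth_append)
  qed
  then show ?thesis using assms unfolding is_path_def by auto
qed

lemma is_path_mono: "is_path V E v w p \<Longrightarrow> V \<subseteq> V' \<Longrightarrow> E \<subseteq> E' \<Longrightarrow> is_path V' E' v w p"
  unfolding is_path_def by blast

lemma int_disjoint_paths_rev:
  assumes "int_disjoint_paths V E v w P" shows "int_disjoint_paths V E w v (rev ` P)"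
  using assms is_path_rev unfolding int_disjoint_paths_def by (fastforce simp: insert_commute)

lemma kappa_sym: "kappa V E v w = kappa V E w v"
proof -
  have sub: "{card P | P. int_disjoint_paths V E v w P} \<subseteq> {card P | P. int_disjoint_paths V E w v P}"
    for v w
  proof safe
    fix P assume "int_disjoint_paths V E v w P"
    then have "int_disjoint_paths V E w v (rev ` P)" by (rule int_disjoint_paths_rev)
    moreover have "card (rev ` P) = card P" by (simp add: card_image)
    ultimately show "\<exists>Q. card P = card Q \<and> int_disjoint_paths V E w v Q" by metis
  qed
  have "{card P | P. int_disjoint_paths V E v w P} = {card P | P. int_disjoint_paths V E w v P}"
    by (rule equalityI[OF sub sub])
  then show ?thesis unfolding kappa_def by simp
qed

lemma kappa_eq_one:
  assumes "v \<noteq> w" and "is_path V E v w p"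
    and "\<And>P. int_disjoint_paths V E v w P \<Longrightarrow> card P \<le> 1"
  shows "kappa V E v w = 1"
proof -
  let ?S = "{card P | P. int_disjoint_paths V E v w P}"
  have "int_disjoint_paths V E v w {p}" using assms(2) unfolding int_disjoint_paths_def by simp
  then have "card {p} \<in> ?S" by blast
  moreover have "?S \<subseteq> {..1}" using assms(3) by auto
  ultimately have "Max ?S = 1" by (intro Max_eqI) (auto intro: finite_subset)
  then show ?thesis using assms(1) by (simp add: kappa_def one_enat_def)
qed

lemma resolving_all_vertices:
  assumes "set W = V" and "distinct W" shows "resolving V E W"
proof -
  have "v1 = v2" if "v1 \<in> V" and "rep V E v1 W = rep V E v2 W" for v1 v2
  proof -
    have "kappa V E v2 v1 = kappa V E v1 v1"
      using that assms(1) unfolding rep_def by simp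
    then show ?thesis by (auto simp: kappa_def split: if_splits)
  qed
  then show ?thesis using assms unfolding resolving_def by blast
qed

lemma cdim_le_length: "resolving V E W \<Longrightarrow> cdim V E \<le> length W"
  unfolding cdim_def by (rule Least_le) blast

lemma basis_exists:
  assumes "finite V" obtains B where "basis V E B"
proof -
  obtain W where "set W = V" "distinct W" using finite_distinct_list assms by blast
  then have "\<exists>k W. resolving V E W \<and> length W = k" using resolving_all_vertices by blast
  then have "\<exists>W. resolving V E W \<and> length W = cdim V E" unfolding cdim_def by (rule LeastI_ex)
  then show thesis using that unfolding basis_def by blast
qed

locale pendant_vertex =
  fixes V :: "'a set" and E :: "'a set set" and u x :: 'a
  assumes graph: "graph V E" and u_in_V: "u \<in> V" and x_notin_V: "x \<notin> V"
begin

abbreviation "V' \<equiv> insert x V"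
abbreviation "E' \<equiv> insert {u, x} E"

lemma finite_vertices: "finite V" and finite_vertices': "finite V'"
  using graph unfolding graph_def by simp_all

lemma pendant_edge:
  assumes "{a, x} \<in> E'" shows "a = u"
proof -
  have "{a, x} \<notin> E" using graph x_notin_V unfolding graph_def by (auto simp: doubleton_eq_iff)
  with assms show ?thesis by (auto simp: doubleton_eq_iff)
qed

lemma pendant_notin_path:
  assumes p: "is_path V' E' v w p" and "v \<in> V" and "w \<in> V"
  shows "x \<notin> set p"
proof
  assume "x \<in> set p"
  then obtain ys zs where p_eq: "p = ys @ x # zs" by (meson split_list)
  have "ys \<noteq> []" using p p_eq \<open>v \<in> V\<close> x_notin_V unfolding is_path_def by auto
  then obtain ys' a where "ys = ys' @ [a]" by (cases ys rule: rev_cases) auto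
  have "zs \<noteq> []" using p p_eq \<open>w \<in> V\<close> x_notin_V unfolding is_path_def by auto
  then obtain b zs' where "zs = b # zs'" by (cases zs) auto
  have "is_path V' E' v w (ys' @ a # x # b # zs')"
    using p p_eq \<open>ys = ys' @ [a]\<close> \<open>zs = b # zs'\<close> by simp
  then have "{a, x} \<in> E'" "{x, b} \<in> E'" "distinct (ys' @ a # x # b # zs')"
    using is_path_adjacent[of V' E' v w ys' a x "b # zs'"]
      is_path_adjacent[of V' E' v w "ys' @ [a]" x b zs'] unfolding is_path_def by auto
  then show False using pendant_edge[of a] pendant_edge[of b] by (auto simp: insert_commute)
qed

lemma is_path_extension_iff:
  assumes "v \<in> V" and "w \<in> V"
  shows "is_path V' E' v w p \<longleftrightarrow> is_path V E v w p"
proof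
  assume p: "is_path V' E' v w p"
  then have "x \<notin> set p" using pendant_notin_path assms by blast
  then have "{p ! i, p ! Suc i} \<in> E" if "Suc i < length p" for i
    using p that nth_mem[of i p] nth_mem[of "Suc i" p] unfolding is_path_def
    by (auto simp: doubleton_eq_iff)
  then show "is_path V E v w p" using p \<open>x \<notin> set p\<close> unfolding is_path_def by auto
qed (auto intro: is_path_mono)

lemma kappa_extension_eq: "v \<in> V \<Longrightarrow> w \<in> V \<Longrightarrow> kappa V' E' v w = kappa V E v w"
  by (simp add: kappa_def int_disjoint_paths_def is_path_extension_iff)

lemma path_to_pendant:
  assumes p: "is_path V' E' v x p" and "v \<in> V"
  obtains q where "p = q @ [u, x]"
proof -
  have "p \<noteq> []" "last p = x" "hd p = v" using p unfolding is_path_def by auto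
  then obtain ys where ys: "p = ys @ [x]" by (metis append_butlast_last_id)
  have "ys \<noteq> []" using ys \<open>hd p = v\<close> \<open>v \<in> V\<close> x_notin_V by auto
  then obtain q a where "ys = q @ [a]" by (cases ys rule: rev_cases) auto
  with p ys have "{a, x} \<in> E'" using is_path_adjacent[of V' E' v x q a x "[]"] by simp
  then show thesis using that ys \<open>ys = q @ [a]\<close> pendant_edge by simp
qed

lemma path_from_attachment:
  assumes p: "is_path V' E' u x p" shows "p = [u, x]"
proof -
  obtain q where q: "p = q @ [u, x]" using path_to_pendant[OF p u_in_V] .
  have "q = []"
  proof (rule ccontr)
    assume "q \<noteq> []"
    then have "u \<in> set q" using p q hd_in_set unfolding is_path_def by fastforce
    then show False using p q unfolding is_path_def by simp
  qed
  with q show ?thesis by simp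
qed

lemma card_paths_to_pendant:
  assumes P: "int_disjoint_paths V' E' v x P" and "v \<in> V"
  shows "card P \<le> 1"
proof -
  have "p = q" if "p \<in> P" "q \<in> P" for p q
  proof (rule ccontr)
    assume "p \<noteq> q"
    have paths: "is_path V' E' v x p" "is_path V' E' v x q"
      using P that unfolding int_disjoint_paths_def by auto
    have "u \<in> set p" by (rule path_to_pendant[OF paths(1) \<open>v \<in> V\<close>]) simp
    moreover have "u \<in> set q" by (rule path_to_pendant[OF paths(2) \<open>v \<in> V\<close>]) simp
    ultimately have "u = v"
      using P that \<open>p \<noteq> q\<close> u_in_V x_notin_V unfolding int_disjoint_paths_def by blast
    then have "p = [u, x]" and "q = [u, x]" using paths path_from_attachment by auto
    then show False using \<open>p \<noteq> q\<close> by simp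
  qed
  then show ?thesis by (cases "finite P") (auto simp: card_le_Suc0_iff_eq)
qed

end

locale connected_pendant_vertex = pendant_vertex +
  assumes connected: "connected V E"
begin

lemma kappa_to_pendant: "v \<in> V \<Longrightarrow> kappa V' E' v x = 1"
proof -
  assume "v \<in> V"
  then obtain p where "is_path V E v u p" using connected u_in_V unfolding connected_def by blast
  moreover have "x \<notin> set p" using \<open>is_path V E v u p\<close> x_notin_V unfolding is_path_def by auto
  ultimately have "is_path V' E' v x (p @ [x])"
    by (intro is_path_snoc[OF is_path_mono]) auto
  moreover have "v \<noteq> x" using \<open>v \<in> V\<close> x_notin_V by blast
  ultimately show ?thesis using kappa_eq_one card_paths_to_pendant \<open>v \<in> V\<close> by metis
qed

lemma rep_extension_eq: "set W \<subseteq> V \<Longrightarrow> v \<in> V \<Longrightarrow> rep V' E' v W = rep V E v W"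
  unfolding rep_def using kappa_extension_eq by auto

lemma rep_pendant_all_ones: "set W \<subseteq> V \<Longrightarrow> rep V' E' x W = replicate (length W) 1"
  unfolding rep_def using kappa_to_pendant kappa_sym[of V' E' x]
  by (auto simp: map_replicate_const[symmetric] intro: map_cong)

lemma resolving_removeAll_pendant:
  assumes W: "resolving V' E' W" shows "resolving V E (removeAll x W)"
proof -
  have "v1 = v2"
    if "v1 \<in> V" "v2 \<in> V" and eq: "rep V E v1 (removeAll x W) = rep V E v2 (removeAll x W)"
    for v1 v2
  proof -
    have "kappa V' E' v1 w = kappa V' E' v2 w" if "w \<in> set W" for w
    proof (cases "w = x")
      case False
      then have "w \<in> V" "w \<in> set (removeAll x W)" using W that unfolding resolving_def by auto
      then show ?thesis using eq \<open>v1 \<in> V\<close> \<open>v2 \<in> V\<close> kappa_extension_eq unfolding rep_def by simp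
    qed (simp add: kappa_to_pendant \<open>v1 \<in> V\<close> \<open>v2 \<in> V\<close>)
    then have "rep V' E' v1 W = rep V' E' v2 W" unfolding rep_def by simp
    then show ?thesis using W that unfolding resolving_def by auto
  qed
  then show ?thesis using W distinct_removeAll unfolding resolving_def by auto
qed

lemma resolving_snoc_pendant:
  assumes B: "resolving V E B" shows "resolving V' E' (B @ [x])"
proof -
  have B_sub: "set B \<subseteq> V" using B unfolding resolving_def by simp
  have old: "rep V' E' v (B @ [x]) = rep V E v B @ [1]" if "v \<in> V" for v
    using rep_extension_eq[OF B_sub that] kappa_to_pendant[OF that] unfolding rep_def by simp
  have new: "rep V' E' x (B @ [x]) = rep V' E' x B @ [\<infinity>]" unfolding rep_def kappa_def by simp
  have "v1 = v2"
    if v12: "v1 \<in> V'" "v2 \<in> V'" and eq: "rep V' E' v1 (B @ [x]) = rep V' E' v2 (B @ [x])"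
    for v1 v2
  proof -
    have "v1 = x \<longleftrightarrow> v2 = x" using v12 eq old new by (auto simp: one_enat_def)
    moreover have "v1 = v2" if "v1 \<in> V" "v2 \<in> V"
      using that eq old B unfolding resolving_def by simp
    ultimately show ?thesis using v12 by blast
  qed
  then show ?thesis using B x_notin_V unfolding resolving_def by auto
qed

lemma resolving_extension_iff:
  assumes B_sub: "set B \<subseteq> V"
  shows "resolving V' E' B \<longleftrightarrow>
    resolving V E B \<and> (\<forall>v\<in>V. rep V E v B \<noteq> replicate (length B) 1)"
proof safe
  assume B: "resolving V' E' B"
  have "removeAll x B = B" using B_sub x_notin_V by (auto intro: removeAll_id)
  then show "resolving V E B" using resolving_removeAll_pendant[OF B] by simp
  fix v assume "v \<in> V" and "rep V E v B = replicate (length B) 1"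
  then have "rep V' E' v B = rep V' E' x B" using rep_extension_eq rep_pendant_all_ones B_sub by simp
  then show False using B \<open>v \<in> V\<close> x_notin_V unfolding resolving_def by auto
next
  assume B: "resolving V E B" and no_ones: "\<forall>v\<in>V. rep V E v B \<noteq> replicate (length B) 1"
  have "v1 = v2" if "v1 \<in> V'" "v2 \<in> V'" "rep V' E' v1 B = rep V' E' v2 B" for v1 v2
    using that B no_ones rep_extension_eq[OF B_sub] rep_pendant_all_ones[OF B_sub]
    unfolding resolving_def by (metis insert_iff)
  then show "resolving V' E' B" using B unfolding resolving_def by auto
qed

lemma cdim_extension_le_Suc: "cdim V' E' \<le> cdim V E + 1"
proof -
  obtain B where "resolving V E B" and "length B = cdim V E"
    using basis_exists[OF finite_vertices] unfolding basis_def by blast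
  then show ?thesis using cdim_le_length[OF resolving_snoc_pendant] by fastforce
qed

lemma cdim_extension_forced:
  assumes "forces_all_ones V E" shows "cdim V' E' = cdim V E + 1"
proof -
  obtain W where W: "resolving V' E' W" and W_length: "length W = cdim V' E'"
    using basis_exists[OF finite_vertices'] unfolding basis_def by blast
  have "cdim V E < length W"
  proof (cases "x \<in> set W")
    case True
    have "cdim V E \<le> length (removeAll x W)"
      using cdim_le_length[OF resolving_removeAll_pendant[OF W]] .
    also have "\<dots> < length W" using length_removeAll_less[OF True] .
    finally show ?thesis .
  next
    case False
    then have "set W \<subseteq> V" using W unfolding resolving_def by auto
    then have res: "resolving V E W" and no_ones: "\<forall>v\<in>V. rep V E v W \<noteq> replicate (length W) 1"
      using W resolving_extension_iff by blast+
    have "\<not> basis V E W"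
    proof
      assume "basis V E W"
      then show False using assms no_ones unfolding forces_all_ones_def by blast
    qed
    then show ?thesis using cdim_le_length[OF res] res unfolding basis_def by simp
  qed
  then show ?thesis using W_length cdim_extension_le_Suc by simp
qed

lemma cdim_extension_unforced:
  assumes "\<not> forces_all_ones V E" shows "cdim V' E' = cdim V E"
proof (rule antisym)
  obtain B where B: "basis V E B" and no_ones: "\<forall>v\<in>V. rep V E v B \<noteq> replicate (length B) 1"
    using assms unfolding forces_all_ones_def by blast
  have "set B \<subseteq> V" using B unfolding basis_def resolving_def by blast
  then have "resolving V' E' B" using resolving_extension_iff B no_ones unfolding basis_def by blast
  from cdim_le_length[OF this] B show "cdim V' E' \<le> cdim V E" unfolding basis_def by simp
  obtain W where W: "resolving V' E' W" and W_length: "length W = cdim V' E'"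
    using basis_exists[OF finite_vertices'] unfolding basis_def by blast
  have "cdim V E \<le> length (removeAll x W)"
    using cdim_le_length[OF resolving_removeAll_pendant[OF W]] .
  also have "\<dots> \<le> length W" by (rule length_removeAll_less_eq)
  finally show "cdim V E \<le> cdim V' E'" using W_length by simp
qed

end

theorem mainTheorem12:
  fixes V :: "'a set" and E :: "'a set set" and u x :: 'a
  assumes "graph V E" and "connected V E" and "u \<in> V" and "x \<notin> V"
  shows "(forces_all_ones V E \<longrightarrow>
            cdim (insert x V) (insert {u, x} E) = cdim V E + 1) \<and>
         (\<not> forces_all_ones V E \<longrightarrow>
            cdim (insert x V) (insert {u, x} E) = cdim V E)"
proof -
  interpret connected_pendant_vertex V E u x
    using assms by unfold_locales
  show ?thesis using cdim_extension_forced cdim_extension_unforced by blast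
qed

end
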